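(* Let $n\geq 1$ and let $\boldsymbol\pi$ be a random permutation of $[n]=\{1,\dots,n\}$. If $\boldsymbol\pi$ is finitely exchangeable, then its cycle structure $\mathrm{z}(\boldsymbol\pi)$ is a finitely exchangeable random partition of $[n]$.
   Context: $\mathcal S_n$ denotes the set of permutations of $[n]$. Every $\pi\in\mathcal S_n$ is written uniquely as a product of disjoint cycles, each cycle starting with its least element and the cycles ordered by their first elements. The cycle structure of $\pi$ is the allocation vector $\mathrm{z}(\pi)=(z_1(\pi),\dots,z_n(\pi))$, where $z_i(\pi)=j$ if $i$ lies in the $j$-th cycle in this ordering (so cycle labels are in order of appearance). The cycle type of $\pi$ is $\mathrm{t}(\pi)=(t_1(\pi),\dots,t_n(\pi))$, with $t_i(\pi)$ the number of cycles of length $i$. A random permutation $\boldsymbol\pi\in\mathcal S_n$ is finitely exchangeable if $P(\boldsymbol\pi=\pi)=P(\boldsymbol\pi=\pi')$ whenever $\mathrm{t}(\pi)=\mathrm{t}(\pi')$. A random partition of $[n]$ given as an allocation vector $\mathbf z=(\boldsymbol z_1,\dots,\boldsymbol z_n)$ with labels in order of appearance is finitely exchangeable if $P(\mathbf z=(z_1,\dots,z_n))=P(\mathbf z=\overline{(z_{\sigma(1)},\dots,z_{\sigma(n)})})$ for every $\sigma\in\mathcal S_n$, where $\overline{(\cdot)}$ denotes the relabeling of the blocks into order of appearance. *)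

theory Defs
  imports "HOL-Probability.Probability_Mass_Function" "HOL-Combinatorics.Permutations"
begin

definition cycle_of :: "(nat \<Rightarrow> nat) \<Rightarrow> nat \<Rightarrow> nat set" where
  "cycle_of \<pi> i = {(\<pi> ^^ k) i | k. True}"

definition cyc_min :: "(nat \<Rightarrow> nat) \<Rightarrow> nat \<Rightarrow> nat" where
  "cyc_min \<pi> i = Min (cycle_of \<pi> i)"

text \<open>Cycle structure z(\<pi>) = (z_1,...,z_n) as a list of length n: z_i = j iff i lies in the
  j-th cycle, cycles ordered by their least elements.\<close>
definition cycle_structure :: "nat \<Rightarrow> (nat \<Rightarrow> nat) \<Rightarrow> nat list" where
  "cycle_structure n \<pi> =
     map (\<lambda>i. card {j \<in> {1..n}. cyc_min \<pi> j = j \<and> j \<le> cyc_min \<pi> i}) [1..<n+1]"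

definition cycle_type :: "nat \<Rightarrow> (nat \<Rightarrow> nat) \<Rightarrow> nat list" where
  "cycle_type n \<pi> =
     map (\<lambda>l. card {c \<in> cycle_of \<pi> ` {1..n}. card c = l}) [1..<n+1]"

text \<open>Relabeling of blocks into order of appearance: the label x becomes 1 + the number of
  distinct labels appearing before the first occurrence of x.\<close>
definition relabel :: "nat list \<Rightarrow> nat list" where
  "relabel w = map (\<lambda>x. card (set (takeWhile (\<lambda>y. y \<noteq> x) w)) + 1) w"

text \<open>Allocation vectors of partitions of [n] with labels in order of appearance.\<close>
definition alloc_vector :: "nat \<Rightarrow> nat list \<Rightarrow> bool" where
  "alloc_vector n w \<longleftrightarrow> length w = n \<and> relabel w = w"

definition permute_vec :: "nat \<Rightarrow> (nat \<Rightarrow> nat) \<Rightarrow> nat list \<Rightarrow> nat list" where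
  "permute_vec n \<sigma> w = map (\<lambda>i. w ! (\<sigma> i - 1)) [1..<n+1]"

definition fin_exch_perm :: "nat \<Rightarrow> (nat \<Rightarrow> nat) pmf \<Rightarrow> bool" where
  "fin_exch_perm n P \<longleftrightarrow>
     (\<forall>\<pi> \<pi>'. \<pi> permutes {1..n} \<longrightarrow> \<pi>' permutes {1..n} \<longrightarrow>
        cycle_type n \<pi> = cycle_type n \<pi>' \<longrightarrow> pmf P \<pi> = pmf P \<pi>')"

definition fin_exch_partition :: "nat \<Rightarrow> nat list pmf \<Rightarrow> bool" where
  "fin_exch_partition n Z \<longleftrightarrow>
     (\<forall>w \<sigma>. alloc_vector n w \<longrightarrow> \<sigma> permutes {1..n} \<longrightarrow>
        pmf Z w = pmf Z (relabel (permute_vec n \<sigma> w)))"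

end

(* Conjugating a permutation by \<sigma> keeps its cycle type and turns its cycle structure w into
   relabel (w \<circ> \<sigma>). Exchangeability therefore makes the law of \<pi> invariant under conjugation
   by \<sigma>, hence the law of z(\<pi>) invariant under w \<mapsto> relabel (w \<circ> \<sigma>). This map is injective on
   allocation vectors (w \<mapsto> relabel (w \<circ> \<sigma>\<^sup>-\<^sup>1) undoes it), so it moves no probability mass
   between them. Both relabelling facts rest on relabel w depending only on the kernel of w, i.e. on which
   positions carry equal labels. *)

theory Submission
  imports Defs "HOL-Combinatorics.Orbits"
begin

definition list_kernel :: "'a list \<Rightarrow> (nat \<times> nat) set" where
  "list_kernel w = {(i, j). i < length w \<and> j < length w \<and> w ! i = w ! j}"

definition first_index :: "'a list \<Rightarrow> 'a \<Rightarrow> nat" where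
  "first_index w x = length (takeWhile (\<lambda>y. y \<noteq> x) w)"

lemma first_index_less: "x \<in> set w \<Longrightarrow> first_index w x < length w"
  unfolding first_index_def by (induction w) auto

lemma nth_first_index: "x \<in> set w \<Longrightarrow> w ! first_index w x = x"
  unfolding first_index_def by (induction w) auto

lemma not_in_take_first_index: "x \<notin> set (take (first_index w x) w)"
  unfolding first_index_def by (metis set_takeWhileD takeWhile_eq_take)

lemma first_index_eqI:
  assumes "a < length w" "w ! a = x" "\<And>j. j < a \<Longrightarrow> w ! j \<noteq> x"
  shows "first_index w x = a"
proof -
  have "takeWhile (\<lambda>y. y \<noteq> x) w = take a w"
    using assms by (intro takeWhile_eq_take_P_nth) auto
  then show ?thesis
    using assms(1) by (simp add: first_index_def)
qed

lemma relabel_conv_first_index: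
  "relabel w = map (\<lambda>x. card (set (take (first_index w x) w)) + 1) w"
  unfolding relabel_def first_index_def by (metis takeWhile_eq_take)

lemma length_relabel [simp]: "length (relabel w) = length w"
  by (simp add: relabel_def)

lemma card_take_first_index_less:
  assumes "x \<in> set w" "first_index w x < first_index w y"
  shows "card (set (take (first_index w x) w)) < card (set (take (first_index w y) w))"
proof (rule psubset_card_mono)
  let ?a = "first_index w x" and ?b = "first_index w y"
  have "?a < length (take ?b w)" "take ?b w ! ?a = x"
    using assms first_index_less[OF assms(1)] nth_first_index[OF assms(1)] by auto
  then have "x \<in> set (take ?b w)"
    using nth_mem[of ?a "take ?b w"] by simp
  moreover have "set (take ?a w) \<subseteq> set (take ?b w)"
    using assms(2) by (intro set_take_subset_set_take) simp
  ultimately show "set (take ?a w) \<subset> set (take ?b w)"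
    using not_in_take_first_index[of x w] by blast
qed simp

lemma inj_on_card_take_first_index:
  "inj_on (\<lambda>x. card (set (take (first_index w x) w))) (set w)"
proof (rule inj_onI)
  fix x y assume xy: "x \<in> set w" "y \<in> set w"
    and eq: "card (set (take (first_index w x) w)) = card (set (take (first_index w y) w))"
  then have "\<not> first_index w x < first_index w y" "\<not> first_index w y < first_index w x"
    using card_take_first_index_less by (metis less_irrefl)+
  then show "x = y"
    using xy by (metis linorder_neqE_nat nth_first_index)
qed

lemma list_kernel_map_inj_on:
  "inj_on f (set w) \<Longrightarrow> list_kernel (map f w) = list_kernel w"
  unfolding list_kernel_def by (auto simp: inj_on_eq_iff)

lemma list_kernel_relabel [simp]: "list_kernel (relabel w) = list_kernel w"
proof -
  have "inj_on (\<lambda>x. card (set (take (first_index w x) w)) + 1) (set w)"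
    using inj_on_card_take_first_index[of w] by (simp add: inj_on_def)
  then show ?thesis
    unfolding relabel_conv_first_index by (rule list_kernel_map_inj_on)
qed

lemma length_eq_if_list_kernel_eq:
  assumes "list_kernel u = list_kernel v" shows "length u = length v"
proof -
  have "{i. (i, i) \<in> list_kernel u} = {..<length u}" "{i. (i, i) \<in> list_kernel v} = {..<length v}"
    by (auto simp: list_kernel_def)
  then have "{..<length u} = {..<length v}"
    using assms by simp
  then show ?thesis
    by simp
qed

lemma length_takeWhile_cong:
  "list_all2 (\<lambda>x y. P x \<longleftrightarrow> Q y) xs ys \<Longrightarrow> length (takeWhile P xs) = length (takeWhile Q ys)"
  by (induction rule: list_all2_induct) auto

lemma card_image_eq_if_same_kernel:
  assumes "\<And>x y. x \<in> A \<Longrightarrow> y \<in> A \<Longrightarrow> f x = f y \<longleftrightarrow> g x = g y"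
  shows "card (f ` A) = card (g ` A)"
proof -
  define h where "h y = g (inv_into A f y)" for y
  have h: "h (f x) = g x" if "x \<in> A" for x
    using assms[of "inv_into A f (f x)" x] that by (simp add: h_def f_inv_into_f inv_into_into)
  then have "g ` A = h ` f ` A"
    by (simp add: image_image)
  moreover have "inj_on h (f ` A)"
    using h assms by (auto simp: inj_on_def)
  ultimately show ?thesis
    by (simp add: card_image)
qed

lemma relabel_eq_if_list_kernel_eq:
  assumes ker: "list_kernel u = list_kernel v"
  shows "relabel u = relabel v"
proof (rule nth_equalityI)
  have len: "length u = length v"
    using ker by (rule length_eq_if_list_kernel_eq)
  then show "length (relabel u) = length (relabel v)"
    by simp
  have same: "u ! k = u ! l \<longleftrightarrow> v ! k = v ! l" if "k < length u" "l < length u" for k l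
    using that len ker unfolding list_kernel_def by blast
  fix i assume "i < length (relabel u)"
  then have i: "i < length u"
    by simp
  have "list_all2 (\<lambda>x y. x \<noteq> u ! i \<longleftrightarrow> y \<noteq> v ! i) u v"
    using len same i by (simp add: list_all2_conv_all_nth)
  then have a: "first_index u (u ! i) = first_index v (v ! i)"
    unfolding first_index_def by (rule length_takeWhile_cong)
  let ?a = "first_index u (u ! i)"
  have "?a \<le> length u"
    using first_index_less[of "u ! i" u] i by simp
  moreover have "card ((!) u ` {0..<?a}) = card ((!) v ` {0..<?a})"
    by (rule card_image_eq_if_same_kernel) (use same \<open>?a \<le> length u\<close> in auto)
  ultimately have "card (set (take ?a u)) = card (set (take ?a v))"
    using len by (simp add: nth_image)
  then show "relabel u ! i = relabel v ! i"
    using i len a by (simp add: relabel_conv_first_index)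
qed

lemma relabel_eq_iff: "relabel u = relabel v \<longleftrightarrow> list_kernel u = list_kernel v"
  by (metis list_kernel_relabel relabel_eq_if_list_kernel_eq)

lemma length_permute_vec [simp]: "length (permute_vec n t w) = n"
  by (simp add: permute_vec_def)

lemma nth_permute_vec: "k < n \<Longrightarrow> permute_vec n t w ! k = w ! (t (Suc k) - 1)"
  by (simp add: permute_vec_def del: upt_Suc)

lemma permutes_interval_Suc:
  assumes "t permutes {1..n}" "k < n"
  shows "t (Suc k) - 1 < n" "Suc (t (Suc k) - 1) = t (Suc k)"
  using permutes_in_image[OF assms(1), of "Suc k"] assms(2) by auto

lemma list_kernel_permute_vec:
  assumes "t permutes {1..n}" "length w = n"
  shows "list_kernel (permute_vec n t w) =
    {(k, l). k < n \<and> l < n \<and> (t (Suc k) - 1, t (Suc l) - 1) \<in> list_kernel w}"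
  using assms permutes_interval_Suc[OF assms(1)] by (auto simp: list_kernel_def nth_permute_vec)

lemma permute_vec_inv:
  assumes s: "s permutes {1..n}" and "length w = n"
  shows "permute_vec n (inv s) (permute_vec n s w) = w"
proof (rule nth_equalityI)
  fix k assume "k < length (permute_vec n (inv s) (permute_vec n s w))"
  then have k: "k < n"
    by simp
  have "Suc (inv s (Suc k) - 1) = inv s (Suc k)"
    using permutes_interval_Suc[OF permutes_inv[OF s] k] by simp
  then show "permute_vec n (inv s) (permute_vec n s w) ! k = w ! k"
    using k permutes_interval_Suc(1)[OF permutes_inv[OF s] k]
    by (simp add: nth_permute_vec permutes_inverses(1)[OF s])
qed (simp add: assms)

lemma relabel_permute_vec_relabel:
  "t permutes {1..n} \<Longrightarrow> length w = n \<Longrightarrow>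
    relabel (permute_vec n t (relabel w)) = relabel (permute_vec n t w)"
  by (simp add: relabel_eq_iff list_kernel_permute_vec)

lemma relabel_permute_vec_inv:
  assumes "s permutes {1..n}" "alloc_vector n w"
  shows "relabel (permute_vec n (inv s) (relabel (permute_vec n s w))) = w"
  using assms
  by (simp add: relabel_permute_vec_relabel permutes_inv permute_vec_inv alloc_vector_def)

lemma inj_on_relabel_permute_vec:
  "s permutes {1..n} \<Longrightarrow> inj_on (\<lambda>w. relabel (permute_vec n s w)) {w. alloc_vector n w}"
  by (rule inj_on_inverseI[where g = "\<lambda>w. relabel (permute_vec n (inv s) w)"])
    (simp add: relabel_permute_vec_inv)

text \<open>\<open>r i\<close> is the least element of the block \<open>{j. r j = r i}\<close> of \<open>i\<close>; \<open>labels\<close> numbers the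
  blocks by the rank of their least elements, which is how \<^const>\<open>cycle_structure\<close> numbers cycles.\<close>

locale least_representatives =
  fixes n :: nat and r :: "nat \<Rightarrow> nat"
  assumes rep_in: "i \<in> {1..n} \<Longrightarrow> r i \<in> {1..n}"
    and rep_le: "i \<in> {1..n} \<Longrightarrow> r i \<le> i"
    and rep_idem: "i \<in> {1..n} \<Longrightarrow> r (r i) = r i"
begin

definition reps :: "nat set" where
  "reps = {j \<in> {1..n}. r j = j}"

definition rank :: "nat \<Rightarrow> nat" where
  "rank m = card {j \<in> reps. j \<le> m}"

definition labels :: "nat list" where
  "labels = map (\<lambda>i. rank (r i)) [1..<n+1]"

lemma rep_in_reps: "i \<in> {1..n} \<Longrightarrow> r i \<in> reps"
  using rep_in rep_idem by (simp add: reps_def)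

lemma strict_mono_on_rank: "strict_mono_on reps rank"
proof (rule strict_mono_onI)
  fix a b assume "a \<in> reps" "b \<in> reps" "a < b"
  then have "{j \<in> reps. j \<le> a} \<subseteq> {j \<in> reps. j \<le> b}"
    and "b \<in> {j \<in> reps. j \<le> b} - {j \<in> reps. j \<le> a}"
    by auto
  then have "{j \<in> reps. j \<le> a} \<subset> {j \<in> reps. j \<le> b}"
    by blast
  then show "rank a < rank b"
    unfolding rank_def by (rule psubset_card_mono[rotated]) (simp add: reps_def)
qed

lemma inj_on_rank: "inj_on rank reps"
  using strict_mono_on_rank by (rule strict_mono_on_imp_inj_on)

lemma length_labels [simp]: "length labels = n"
  by (simp add: labels_def)

lemma nth_labels: "k < n \<Longrightarrow> labels ! k = rank (r (Suc k))"
  by (simp add: labels_def del: upt_Suc)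

lemma list_kernel_labels:
  "list_kernel labels = {(k, l). k < n \<and> l < n \<and> r (Suc k) = r (Suc l)}"
  using inj_on_rank rep_in_reps by (auto simp: list_kernel_def nth_labels inj_on_eq_iff)

lemma first_index_labels:
  assumes k: "k < n"
  shows "first_index labels (labels ! k) = r (Suc k) - 1"
proof (rule first_index_eqI)
  let ?m = "r (Suc k)"
  have m: "?m \<in> reps" "?m \<in> {1..n}"
    using rep_in_reps[of "Suc k"] k by (auto simp: reps_def)
  then show "?m - 1 < length labels" "labels ! (?m - 1) = labels ! k"
    using k by (auto simp: nth_labels reps_def)
  fix j assume j: "j < ?m - 1"
  then have "Suc j \<in> {1..n}"
    using m(2) by auto
  then have "r (Suc j) \<noteq> ?m"
    using rep_le[of "Suc j"] j by auto
  then show "labels ! j \<noteq> labels ! k"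
    using j m k rep_in_reps inj_on_rank by (auto simp: nth_labels inj_on_eq_iff)
qed

lemma set_take_labels:
  assumes m: "m \<in> reps"
  shows "set (take (m - 1) labels) = rank ` {c \<in> reps. c < m}"
proof -
  have m_le: "m \<le> n"
    using m by (simp add: reps_def)
  have reps_below: "(\<lambda>j. r (Suc j)) ` {0..<m - 1} = {c \<in> reps. c < m}"
  proof (intro set_eqI iffI)
    fix c assume "c \<in> (\<lambda>j. r (Suc j)) ` {0..<m - 1}"
    then obtain j where j: "j < m - 1" "c = r (Suc j)"
      by auto
    then have "Suc j \<in> {1..n}"
      using m_le by auto
    then show "c \<in> {c \<in> reps. c < m}"
      using j rep_in_reps rep_le by fastforce
  next
    fix c assume "c \<in> {c \<in> reps. c < m}"
    then have "c - 1 \<in> {0..<m - 1}" "c = r (Suc (c - 1))"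
      by (auto simp: reps_def)
    then show "c \<in> (\<lambda>j. r (Suc j)) ` {0..<m - 1}"
      by blast
  qed
  have "set (take (m - 1) labels) = (!) labels ` {0..<m - 1}"
    using m_le by (intro nth_image[symmetric]) auto
  also have "\<dots> = rank ` (\<lambda>j. r (Suc j)) ` {0..<m - 1}"
    unfolding image_image using m_le by (intro image_cong) (auto simp: nth_labels)
  finally show ?thesis
    by (simp only: reps_below)
qed

lemma card_rank_below:
  assumes "m \<in> reps"
  shows "card (rank ` {c \<in> reps. c < m}) + 1 = rank m"
proof -
  have "{j \<in> reps. j \<le> m} = insert m {c \<in> reps. c < m}"
    using assms by auto
  moreover have "card (rank ` {c \<in> reps. c < m}) = card {c \<in> reps. c < m}"
    by (rule card_image) (rule inj_on_subset[OF inj_on_rank], auto)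
  ultimately show ?thesis
    by (simp add: rank_def)
qed

lemma relabel_labels: "relabel labels = labels"
proof (rule nth_equalityI)
  fix k assume "k < length (relabel labels)"
  then have k: "k < n" "Suc k \<in> {1..n}"
    by auto
  then show "relabel labels ! k = labels ! k"
    using first_index_labels set_take_labels card_rank_below rep_in_reps
    by (simp add: relabel_conv_first_index nth_labels)
qed simp

end

lemma length_cycle_structure [simp]: "length (cycle_structure n p) = n"
  by (simp add: cycle_structure_def)

lemma cycle_of_eq_orbit: "permutation p \<Longrightarrow> cycle_of p i = orbit p i"
  by (simp add: cycle_of_def orbit_altdef_permutation)

lemma self_in_cycle_of: "i \<in> cycle_of p i"
  unfolding cycle_of_def by (metis (mono_tags) funpow_0 mem_Collect_eq)

lemma cycle_of_eq:
  "permutation p \<Longrightarrow> j \<in> cycle_of p i \<Longrightarrow> cycle_of p j = cycle_of p i"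
  by (simp add: cycle_of_eq_orbit orbit_cyclic_eq3[OF cyclic_on_orbit'])

context
  fixes n :: nat and p :: "nat \<Rightarrow> nat"
  assumes p: "p permutes {1..n}"
begin

lemma permutation_of_interval: "permutation p"
  using p by (auto simp: permutation_permutes)

lemma cycle_of_subset: "i \<in> {1..n} \<Longrightarrow> cycle_of p i \<subseteq> {1..n}"
  using permutes_orbit_subset[OF p] by (simp add: cycle_of_eq_orbit permutation_of_interval)

lemma finite_cycle_of: "i \<in> {1..n} \<Longrightarrow> finite (cycle_of p i)"
  using cycle_of_subset finite_subset by blast

lemma cyc_min_in_cycle_of: "i \<in> {1..n} \<Longrightarrow> cyc_min p i \<in> cycle_of p i"
  unfolding cyc_min_def using finite_cycle_of self_in_cycle_of by (intro Min_in) auto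

lemma cyc_min_eq_iff:
  assumes "i \<in> {1..n}" "j \<in> {1..n}"
  shows "cyc_min p i = cyc_min p j \<longleftrightarrow> j \<in> cycle_of p i"
proof
  assume "cyc_min p i = cyc_min p j"
  then have "cycle_of p i = cycle_of p j"
    using cycle_of_eq[OF permutation_of_interval] cyc_min_in_cycle_of assms by metis
  then show "j \<in> cycle_of p i"
    using self_in_cycle_of by simp
qed (simp add: cyc_min_def cycle_of_eq[OF permutation_of_interval])

lemma least_representatives_cyc_min: "least_representatives n (cyc_min p)"
proof
  fix i assume i: "i \<in> {1..n}"
  show "cyc_min p i \<le> i"
    unfolding cyc_min_def using finite_cycle_of[OF i] self_in_cycle_of by (rule Min_le)
  show "cyc_min p i \<in> {1..n}"
    using cyc_min_in_cycle_of cycle_of_subset i by blast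
  then show "cyc_min p (cyc_min p i) = cyc_min p i"
    using cyc_min_eq_iff[OF i, of "cyc_min p i"] cyc_min_in_cycle_of[OF i] by simp
qed

lemma cycle_structure_eq_labels:
  "cycle_structure n p = least_representatives.labels n (cyc_min p)"
  by (simp add: cycle_structure_def least_representatives.labels_def
      least_representatives.rank_def least_representatives.reps_def least_representatives_cyc_min)

lemma alloc_vector_cycle_structure: "alloc_vector n (cycle_structure n p)"
  using least_representatives.relabel_labels[OF least_representatives_cyc_min]
    least_representatives.length_labels[OF least_representatives_cyc_min]
  by (simp add: alloc_vector_def cycle_structure_eq_labels)

lemma list_kernel_cycle_structure:
  "list_kernel (cycle_structure n p) = {(k, l). k < n \<and> l < n \<and> Suc l \<in> cycle_of p (Suc k)}"
proof -
  have "cyc_min p (Suc k) = cyc_min p (Suc l) \<longleftrightarrow> Suc l \<in> cycle_of p (Suc k)"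
    if "k < n" "l < n" for k l
    using that by (intro cyc_min_eq_iff) auto
  then show ?thesis
    unfolding cycle_structure_eq_labels
      least_representatives.list_kernel_labels[OF least_representatives_cyc_min]
    by blast
qed

end

lemma conjugate_cancel:
  assumes "bij s"
  shows "inv s \<circ> (s \<circ> q \<circ> inv s) \<circ> s = q" "s \<circ> (inv s \<circ> q \<circ> s) \<circ> inv s = q"
  using assms by (simp_all add: fun_eq_iff bij_is_inj bij_is_surj surj_f_inv_f)

lemma funpow_conjugate: "bij s \<Longrightarrow> (inv s \<circ> p \<circ> s) ^^ k = inv s \<circ> p ^^ k \<circ> s"
  by (induction k) (auto simp: fun_eq_iff bij_is_inj bij_is_surj surj_f_inv_f)

lemma cycle_of_conjugate: "bij s \<Longrightarrow> cycle_of (inv s \<circ> p \<circ> s) i = inv s ` cycle_of p (s i)"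
  by (auto simp: cycle_of_def funpow_conjugate)

lemma cycle_type_conjugate:
  assumes s: "s permutes {1..n}"
  shows "cycle_type n (inv s \<circ> p \<circ> s) = cycle_type n p"
proof -
  have inj: "inj (inv s)"
    using permutes_inj[OF permutes_inv[OF s]] .
  have cycles: "cycle_of (inv s \<circ> p \<circ> s) ` {1..n} = image (inv s) ` cycle_of p ` {1..n}"
    using cycle_of_conjugate[OF permutes_bij[OF s]] permutes_image[OF s]
    by (metis (no_types, lifting) image_comp image_cong comp_apply)
  have "{c \<in> image (inv s) ` X. card c = l} = image (inv s) ` {c \<in> X. card c = l}" for X l
    using card_image[OF inj_on_subset[OF inj subset_UNIV]] by auto
  moreover have "inj_on (image (inv s)) X" for X
    using inj by (simp add: inj_on_def inj_image_eq_iff)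
  ultimately show ?thesis
    unfolding cycle_type_def cycles by (simp add: card_image)
qed

lemma cycle_structure_conjugate:
  assumes s: "s permutes {1..n}" and p: "p permutes {1..n}"
  shows "cycle_structure n (inv s \<circ> p \<circ> s) = relabel (permute_vec n s (cycle_structure n p))"
proof -
  have q: "inv s \<circ> p \<circ> s permutes {1..n}"
    using s p by (intro permutes_compose permutes_inv)
  have "Suc l \<in> cycle_of (inv s \<circ> p \<circ> s) (Suc k) \<longleftrightarrow>
      Suc (s (Suc l) - 1) \<in> cycle_of p (Suc (s (Suc k) - 1))" if "k < n" "l < n" for k l
    using that permutes_interval_Suc(2)[OF s] bij_vimage_eq_inv_image[OF permutes_bij[OF s]]
    by (auto simp: cycle_of_conjugate[OF permutes_bij[OF s]] simp flip: vimage_eq)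
  then have "list_kernel (cycle_structure n (inv s \<circ> p \<circ> s)) =
      list_kernel (permute_vec n s (cycle_structure n p))"
    using permutes_interval_Suc(1)[OF s]
    by (auto simp: list_kernel_cycle_structure[OF q] list_kernel_permute_vec[OF s]
        list_kernel_cycle_structure[OF p])
  then show ?thesis
    using alloc_vector_cycle_structure[OF q] by (metis alloc_vector_def relabel_eq_iff)
qed

lemma pmf_map_pmf_inj_on:
  assumes "inj_on f A" "set_pmf M \<subseteq> A" "x \<in> A"
  shows "pmf (map_pmf f M) (f x) = pmf M x"
proof (cases "x \<in> set_pmf M")
  case True
  show ?thesis
    using inj_on_subset[OF assms(1,2)] True by (rule pmf_map_inj)
next
  case False
  then have "f x \<notin> f ` set_pmf M"
    using assms by (simp add: inj_on_image_mem_iff)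
  then show ?thesis
    using False by (simp add: pmf_map_outside pmf_eq_0_set_pmf)
qed

lemma pmf_conjugate:
  assumes "fin_exch_perm n P" "\<forall>\<pi> \<in> set_pmf P. \<pi> permutes {1..n}" "s permutes {1..n}"
  shows "pmf P (inv s \<circ> p \<circ> s) = pmf P p"
proof (cases "p permutes {1..n}")
  case True
  then show ?thesis
    using assms cycle_type_conjugate[OF assms(3)] unfolding fin_exch_perm_def
    by (metis permutes_compose permutes_inv)
next
  case False
  then have "\<not> (inv s \<circ> p \<circ> s) permutes {1..n}"
    using conjugate_cancel(2)[OF permutes_bij[OF assms(3)], of p] assms(3)
    by (metis permutes_compose permutes_inv)
  then show ?thesis
    using False assms(2) by (metis pmf_eq_0_set_pmf)
qed

lemma map_pmf_conjugate:
  assumes "fin_exch_perm n P" "\<forall>\<pi> \<in> set_pmf P. \<pi> permutes {1..n}" "s permutes {1..n}"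
  shows "map_pmf (\<lambda>p. inv s \<circ> p \<circ> s) P = P"
proof (rule pmf_eqI)
  fix q
  let ?r = "s \<circ> q \<circ> inv s"
  have q: "inv s \<circ> ?r \<circ> s = q"
    using permutes_bij[OF assms(3)] by (rule conjugate_cancel(1))
  have inj: "inj (\<lambda>p. inv s \<circ> p \<circ> s)"
    by (rule inj_on_inverseI[where g = "\<lambda>q. s \<circ> q \<circ> inv s"])
      (rule conjugate_cancel(2)[OF permutes_bij[OF assms(3)]])
  have "pmf (map_pmf (\<lambda>p. inv s \<circ> p \<circ> s) P) q = pmf P ?r"
    using pmf_map_inj'[OF inj, of P ?r] by (simp only: q)
  also have "\<dots> = pmf P q"
    using pmf_conjugate[OF assms, of ?r] by (simp only: q)
  finally show "pmf (map_pmf (\<lambda>p. inv s \<circ> p \<circ> s) P) q = pmf P q" .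
qed

theorem proposition1:
  fixes n :: nat and P :: "(nat \<Rightarrow> nat) pmf"
  assumes "n \<ge> 1"
    and "\<forall>\<pi> \<in> set_pmf P. \<pi> permutes {1..n}"
    and "fin_exch_perm n P"
  shows "fin_exch_partition n (map_pmf (cycle_structure n) P)"
  unfolding fin_exch_partition_def
proof (intro allI impI)
  fix w \<sigma> assume w: "alloc_vector n w" and \<sigma>: "\<sigma> permutes {1..n}"
  let ?Z = "map_pmf (cycle_structure n) P"
  let ?act = "\<lambda>w. relabel (permute_vec n \<sigma> w)"
  have "map_pmf ?act ?Z = map_pmf (cycle_structure n) (map_pmf (\<lambda>p. inv \<sigma> \<circ> p \<circ> \<sigma>) P)"
    using assms(2) \<sigma> by (auto simp: map_pmf_comp cycle_structure_conjugate intro!: map_pmf_cong)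
  also have "\<dots> = ?Z"
    by (simp only: map_pmf_conjugate[OF assms(3,2) \<sigma>])
  finally have invariant: "map_pmf ?act ?Z = ?Z" .
  have "set_pmf ?Z \<subseteq> {w. alloc_vector n w}"
    using assms(2) alloc_vector_cycle_structure by auto
  then show "pmf ?Z w = pmf ?Z (?act w)"
    using pmf_map_pmf_inj_on[OF inj_on_relabel_permute_vec[OF \<sigma>]] w invariant
    by (metis mem_Collect_eq)
qed

end
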